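(* Let $R=\bigoplus_{\alpha\in\Gamma}R_{\alpha}$ be a graded integral domain, let $T$ be a homogeneous overring of $R$, and let $\star$ (resp. $\star'$) be a semistar operation on $R$ (resp. on $T$). Then $T$ is a homogeneously $(\star,\star')$-linked overring of $R$ if and only if $\mathrm{NA}(R,\star)\subseteq\mathrm{NA}(T,\star')$.
   Context: $\Gamma$ is a commutative cancellative monoid (written additively) whose quotient group $\langle\Gamma\rangle$ is torsion-free. A graded integral domain $R=\bigoplus_{\alpha\in\Gamma}R_\alpha$ is an integral domain that is the direct sum of additive subgroups $R_\alpha$ with $R_\alpha R_\beta\subseteq R_{\alpha+\beta}$. $K$ is its quotient field, $H$ the set of nonzero homogeneous elements, $R_H=\bigoplus_{\alpha\in\langle\Gamma\rangle}(R_H)_\alpha$ the homogeneous quotient field. A homogeneous overring of $R$ is a ring $T$ with $R\subseteq T\subseteq R_H$ and $T=\bigoplus_{\alpha\in\langle\Gamma\rangle}(T\cap(R_H)_\alpha)$; it is a graded integral domain with $T_\alpha=T\cap(R_H)_\alpha$. For a graded domain $S$ (such as $R$ or $T$), $a\in S$, $C_S(a)$ is the ideal of $S$ generated by the homogeneous components of $a$, and for $f=f_0+\cdots+f_nX^n\in S[X]$, $A_f:=\sum_iC_S(f_i)$ (computed in $S$). A semistar operation on $S$ is a map $\star$ from the set of nonzero $S$-submodules of $K$ to itself such that for all $0\ne x\in K$ and $E,F$: $(xE)^\star=xE^\star$; $E\subseteq F\Rightarrow E^\star\subseteq F^\star$; $E\subseteq E^\star$; $(E^\star)^\star=E^\star$.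 $N(\star):=\{f\in S[X]: f\ne0,\ A_f^\star=S^\star\}$ and $\mathrm{NA}(S,\star):=S[X]_{N(\star)}$. $T$ is a homogeneously $(\star,\star')$-linked overring of $R$ if for each nonzero homogeneous finitely generated ideal $F$ of $R$, $F^\star=R^\star$ implies $(FT)^{\star'}=T^{\star'}$. *)

theory Defs
  imports "HOL-Computational_Algebra.Polynomial" "HOL-Computational_Algebra.Fraction_Field"
begin

(* Everything lives inside a field 'k, which is assumed (in the theorem) to be the
   quotient field K of R.  Gradings are indexed by an abelian group 'g containing
   the monoid Gamma; components outside Gamma are {0}. *)

definition is_subring :: "'k::field set \<Rightarrow> bool" where
  "is_subring S \<longleftrightarrow> 0 \<in> S \<and> 1 \<in> S \<and>
     (\<forall>x\<in>S. \<forall>y\<in>S. x + y \<in> S \<and> x - y \<in> S \<and> x * y \<in> S)"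

definition additive_subgroup :: "'k::field set \<Rightarrow> bool" where
  "additive_subgroup A \<longleftrightarrow> 0 \<in> A \<and> (\<forall>x\<in>A. \<forall>y\<in>A. x - y \<in> A)"

definition is_decomp :: "('g \<Rightarrow> 'k::field set) \<Rightarrow> 'k \<Rightarrow> ('g \<Rightarrow> 'k) \<Rightarrow> bool" where
  "is_decomp A a f \<longleftrightarrow> finite {\<alpha>. f \<alpha> \<noteq> 0} \<and> (\<forall>\<alpha>. f \<alpha> \<in> A \<alpha>) \<and>
     a = (\<Sum>\<alpha>\<in>{\<alpha>. f \<alpha> \<noteq> 0}. f \<alpha>)"

text \<open>R = direct sum of the R_alpha, alpha in Gamma; Gamma a submonoid of 'g
  (hence cancellative) whose generated group is torsion-free.\<close>
definition graded_domain :: "'g::ab_group_add set \<Rightarrow> 'k::field set \<Rightarrow> ('g \<Rightarrow> 'k set) \<Rightarrow> bool" where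
  "graded_domain \<Gamma> R A \<longleftrightarrow>
     is_subring R \<and>
     0 \<in> \<Gamma> \<and> (\<forall>a\<in>\<Gamma>. \<forall>b\<in>\<Gamma>. a + b \<in> \<Gamma>) \<and>
     (\<forall>g\<in>{a - b | a b. a \<in> \<Gamma> \<and> b \<in> \<Gamma>}. \<forall>n::nat. n > 0 \<longrightarrow> (\<Sum>i<n. g) = 0 \<longrightarrow> g = 0) \<and>
     (\<forall>\<alpha>. additive_subgroup (A \<alpha>)) \<and>
     (\<forall>\<alpha>. \<alpha> \<notin> \<Gamma> \<longrightarrow> A \<alpha> = {0}) \<and>
     (\<forall>\<alpha> \<beta>. \<forall>x\<in>A \<alpha>. \<forall>y\<in>A \<beta>. x * y \<in> A (\<alpha> + \<beta>)) \<and>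
     (\<forall>a. a \<in> R \<longleftrightarrow> (\<exists>f. is_decomp A a f)) \<and>
     (\<forall>a f g. is_decomp A a f \<and> is_decomp A a g \<longrightarrow> f = g)"

definition homog :: "('g \<Rightarrow> 'k::field set) \<Rightarrow> 'k set" where
  "homog A = {x. x \<noteq> 0 \<and> (\<exists>\<alpha>. x \<in> A \<alpha>)}"

definition RH :: "'k::field set \<Rightarrow> ('g \<Rightarrow> 'k set) \<Rightarrow> 'k set" where
  "RH R A = {r / h | r h. r \<in> R \<and> h \<in> homog A}"

definition RH_comp :: "('g::ab_group_add \<Rightarrow> 'k::field set) \<Rightarrow> 'g \<Rightarrow> 'k set" where
  "RH_comp A \<alpha> = {a / b | a b \<beta> \<gamma>. a \<in> A \<beta> \<and> b \<in> A \<gamma> \<and> b \<noteq> 0 \<and> \<alpha> = \<beta> - \<gamma>}"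

definition over_comp :: "'k::field set \<Rightarrow> ('g::ab_group_add \<Rightarrow> 'k set) \<Rightarrow> 'g \<Rightarrow> 'k set" where
  "over_comp T A \<alpha> = T \<inter> RH_comp A \<alpha>"

definition homogeneous_overring :: "'k::field set \<Rightarrow> ('g::ab_group_add \<Rightarrow> 'k set) \<Rightarrow> 'k set \<Rightarrow> bool" where
  "homogeneous_overring R A T \<longleftrightarrow> is_subring T \<and> R \<subseteq> T \<and> T \<subseteq> RH R A \<and>
     (\<forall>a\<in>T. \<exists>f. is_decomp (over_comp T A) a f)"

definition comp :: "('g \<Rightarrow> 'k::field set) \<Rightarrow> 'k \<Rightarrow> 'g \<Rightarrow> 'k" where
  "comp A a = (THE f. is_decomp A a f)"

definition ideal_gen :: "'k::field set \<Rightarrow> 'k set \<Rightarrow> 'k set" where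
  "ideal_gen S X = {\<Sum>x\<in>Y. s x * x | Y s. finite Y \<and> Y \<subseteq> X \<and> (\<forall>x\<in>Y. s x \<in> S)}"

definition Cont :: "'k::field set \<Rightarrow> ('g \<Rightarrow> 'k set) \<Rightarrow> 'k \<Rightarrow> 'k set" where
  "Cont S A a = ideal_gen S (range (comp A a))"

definition Af :: "'k::field set \<Rightarrow> ('g \<Rightarrow> 'k set) \<Rightarrow> 'k poly \<Rightarrow> 'k set" where
  "Af S A p = ideal_gen S (\<Union>i. Cont S A (coeff p i))"

definition nz_submodule :: "'k::field set \<Rightarrow> 'k set \<Rightarrow> bool" where
  "nz_submodule S E \<longleftrightarrow> 0 \<in> E \<and> (\<forall>x\<in>E. \<forall>y\<in>E. x + y \<in> E) \<and>
     (\<forall>s\<in>S. \<forall>x\<in>E. s * x \<in> E) \<and> E \<noteq> {0}"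

definition semistar :: "'k::field set \<Rightarrow> ('k set \<Rightarrow> 'k set) \<Rightarrow> bool" where
  "semistar S st \<longleftrightarrow> (\<forall>E F. nz_submodule S E \<and> nz_submodule S F \<longrightarrow>
     nz_submodule S (st E) \<and>
     (\<forall>x. x \<noteq> 0 \<longrightarrow> st ((*) x ` E) = (*) x ` st E) \<and>
     (E \<subseteq> F \<longrightarrow> st E \<subseteq> st F) \<and>
     E \<subseteq> st E \<and> st (st E) = st E)"

definition polys :: "'k::field set \<Rightarrow> 'k poly set" where
  "polys S = {p. \<forall>i. coeff p i \<in> S}"

definition Nset :: "'k::field set \<Rightarrow> ('g \<Rightarrow> 'k set) \<Rightarrow> ('k set \<Rightarrow> 'k set) \<Rightarrow> 'k poly set" where
  "Nset S A st = {f \<in> polys S. f \<noteq> 0 \<and> st (Af S A f) = st S}"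

text \<open>NA(S,star) = S[X]_{N(star)} as a subring of K(X) = fraction field of K[X]\<close>
definition NA :: "'k::field set \<Rightarrow> ('g \<Rightarrow> 'k set) \<Rightarrow> ('k set \<Rightarrow> 'k set) \<Rightarrow> 'k poly fract set" where
  "NA S A st = {Fract g f | g f. g \<in> polys S \<and> f \<in> Nset S A st}"

definition homog_fg_ideal :: "'k::field set \<Rightarrow> ('g \<Rightarrow> 'k set) \<Rightarrow> 'k set \<Rightarrow> bool" where
  "homog_fg_ideal R A F \<longleftrightarrow> F \<noteq> {0} \<and>
     (\<exists>X. finite X \<and> X \<subseteq> R \<and> F = ideal_gen R X) \<and>
     (\<forall>a\<in>F. \<forall>\<alpha>. comp A a \<alpha> \<in> F)"

definition homog_linked ::
  "'k::field set \<Rightarrow> ('g \<Rightarrow> 'k set) \<Rightarrow> ('k set \<Rightarrow> 'k set) \<Rightarrow> 'k set \<Rightarrow> ('k set \<Rightarrow> 'k set) \<Rightarrow> bool" where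
  "homog_linked R A st T st' \<longleftrightarrow>
     (\<forall>F. homog_fg_ideal R A F \<and> st F = st R \<longrightarrow> st' (ideal_gen T F) = st' T)"

end

theory Submission
  imports Defs
begin

text \<open>For a nonzero polynomial f over R the ideal A_f is homogeneous and finitely generated
  (by the homogeneous components of the coefficients of f), and every nonzero homogeneous
  finitely generated ideal F arises in this way: take for f a polynomial whose coefficients
  are the homogeneous components of a finite generating set of F. A homogeneous element of R
  is homogeneous of the same degree in T, so A_f computed in T is the extension A_f T. Hence
  linkedness says exactly that N(star) is contained in N(star'). Finally A_(gf) is contained
  in A_f, so N(star') is closed under divisors; therefore NA(R,star) is contained in
  NA(T,star') (which forces 1/f = g/h with h = gf in N(star')) if and only if N(star) is
  contained in N(star').\<close>

lemma is_decompI: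
  assumes "finite D" "\<And>\<alpha>. \<alpha> \<notin> D \<Longrightarrow> f \<alpha> = 0" "\<And>\<alpha>. f \<alpha> \<in> B \<alpha>" "a = sum f D"
  shows "is_decomp B a f"
proof -
  have sub: "{\<alpha>. f \<alpha> \<noteq> 0} \<subseteq> D" using assms(2) by blast
  have "sum f D = sum f {\<alpha>. f \<alpha> \<noteq> 0}" by (rule sum.mono_neutral_right[OF assms(1) sub]) auto
  thus ?thesis unfolding is_decomp_def using assms finite_subset[OF sub] by auto
qed

lemma is_decomp_sum:
  assumes "is_decomp B a f" "finite D" "{\<alpha>. f \<alpha> \<noteq> 0} \<subseteq> D"
  shows "a = sum f D"
proof -
  have "sum f {\<alpha>. f \<alpha> \<noteq> 0} = sum f D" by (rule sum.mono_neutral_left[OF assms(2,3)]) auto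
  thus ?thesis using assms(1) unfolding is_decomp_def by auto
qed

lemma is_decomp_finite: "is_decomp B a f \<Longrightarrow> finite {\<alpha>. f \<alpha> \<noteq> 0}"
  and is_decomp_in: "is_decomp B a f \<Longrightarrow> f \<alpha> \<in> B \<alpha>"
  unfolding is_decomp_def by auto

lemma is_subringD:
  assumes "is_subring S"
  shows "0 \<in> S" "1 \<in> S" "x \<in> S \<Longrightarrow> y \<in> S \<Longrightarrow> x + y \<in> S"
    "x \<in> S \<Longrightarrow> y \<in> S \<Longrightarrow> x - y \<in> S" "x \<in> S \<Longrightarrow> y \<in> S \<Longrightarrow> x * y \<in> S"
  using assms unfolding is_subring_def by auto

lemma ideal_genE:
  assumes "a \<in> ideal_gen S Y"
  obtains Y0 s where "finite Y0" "Y0 \<subseteq> Y" "\<forall>x\<in>Y0. s x \<in> S" "a = (\<Sum>x\<in>Y0. s x * x)"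
  using assms unfolding ideal_gen_def by blast

lemma ideal_genI:
  "finite Y0 \<Longrightarrow> Y0 \<subseteq> Y \<Longrightarrow> \<forall>x\<in>Y0. s x \<in> S \<Longrightarrow> (\<Sum>x\<in>Y0. s x * x) \<in> ideal_gen S Y"
  unfolding ideal_gen_def by blast

lemma zero_in_ideal_gen: "0 \<in> ideal_gen S Y"
  using ideal_genI[of "{}" Y] by simp

lemma subset_ideal_gen: "is_subring S \<Longrightarrow> Y \<subseteq> ideal_gen S Y"
  using ideal_genI[of "{y}" Y "\<lambda>_. 1" S for y] is_subringD(2) by fastforce

lemma generator_in_ideal_gen: "is_subring S \<Longrightarrow> y \<in> Y \<Longrightarrow> y \<in> ideal_gen S Y"
  using subset_ideal_gen by blast

lemma ideal_gen_mono: "Y \<subseteq> Y' \<Longrightarrow> S \<subseteq> S' \<Longrightarrow> ideal_gen S Y \<subseteq> ideal_gen S' Y'"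
  unfolding ideal_gen_def by blast

lemma ideal_gen_add:
  assumes S: "is_subring S" and a: "a \<in> ideal_gen S Y" and b: "b \<in> ideal_gen S Y"
  shows "a + b \<in> ideal_gen S Y"
proof -
  obtain Y1 s1 where 1: "finite Y1" "Y1 \<subseteq> Y" "\<forall>x\<in>Y1. s1 x \<in> S" "a = (\<Sum>x\<in>Y1. s1 x * x)"
    using a by (rule ideal_genE)
  obtain Y2 s2 where 2: "finite Y2" "Y2 \<subseteq> Y" "\<forall>x\<in>Y2. s2 x \<in> S" "b = (\<Sum>x\<in>Y2. s2 x * x)"
    using b by (rule ideal_genE)
  define t1 where "t1 x = (if x \<in> Y1 then s1 x else 0)" for x
  define t2 where "t2 x = (if x \<in> Y2 then s2 x else 0)" for x
  have f: "finite (Y1 \<union> Y2)" using 1 2 by auto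
  have e1: "(\<Sum>x\<in>Y1 \<union> Y2. t1 x * x) = a"
    unfolding 1(4) by (rule sum.mono_neutral_cong_right[OF f]) (auto simp: t1_def)
  have e2: "(\<Sum>x\<in>Y1 \<union> Y2. t2 x * x) = b"
    unfolding 2(4) by (rule sum.mono_neutral_cong_right[OF f]) (auto simp: t2_def)
  have "a + b = (\<Sum>x\<in>Y1 \<union> Y2. (t1 x + t2 x) * x)"
    unfolding e1[symmetric] e2[symmetric] distrib_right by (rule sum.distrib[symmetric])
  moreover have "\<forall>x\<in>Y1 \<union> Y2. t1 x + t2 x \<in> S"
    using 1(3) 2(3) is_subringD[OF S] by (auto simp: t1_def t2_def)
  ultimately show ?thesis using ideal_genI[OF f, of Y "\<lambda>x. t1 x + t2 x" S] 1(2) 2(2) by simp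
qed

lemma ideal_gen_mult:
  assumes S: "is_subring S" and r: "r \<in> S" and a: "a \<in> ideal_gen S Y"
  shows "r * a \<in> ideal_gen S Y"
proof -
  obtain Y1 s1 where 1: "finite Y1" "Y1 \<subseteq> Y" "\<forall>x\<in>Y1. s1 x \<in> S" "a = (\<Sum>x\<in>Y1. s1 x * x)"
    using a by (rule ideal_genE)
  have "r * a = (\<Sum>x\<in>Y1. (r * s1 x) * x)" unfolding 1(4) by (simp add: sum_distrib_left mult.assoc)
  moreover have "\<forall>x\<in>Y1. r * s1 x \<in> S" using 1(3) is_subringD(5)[OF S r] by auto
  ultimately show ?thesis using ideal_genI[OF 1(1,2)] by simp
qed

lemma ideal_gen_subsetI:
  assumes "0 \<in> I" "\<And>x y. x \<in> I \<Longrightarrow> y \<in> I \<Longrightarrow> x + y \<in> I"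
    and "\<And>s y. s \<in> S \<Longrightarrow> y \<in> Y \<Longrightarrow> s * y \<in> I"
  shows "ideal_gen S Y \<subseteq> I"
proof
  fix a assume "a \<in> ideal_gen S Y"
  then obtain Y1 s1 where 1: "finite Y1" "Y1 \<subseteq> Y" "\<forall>x\<in>Y1. s1 x \<in> S" "a = (\<Sum>x\<in>Y1. s1 x * x)"
    by (rule ideal_genE)
  have "(\<Sum>x\<in>Y1. s1 x * x) \<in> I" using 1(1-3)
    by (induction Y1 rule: finite_induct) (auto intro: assms)
  thus "a \<in> I" using 1(4) by simp
qed

lemma ideal_gen_sum:
  assumes "is_subring S" "finite I" "\<forall>i\<in>I. x i \<in> ideal_gen S Y"
  shows "sum x I \<in> ideal_gen S Y"
  using assms(2,3)
  by (induction I rule: finite_induct) (auto intro: zero_in_ideal_gen ideal_gen_add[OF assms(1)])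

lemma ideal_gen_subset_ideal_gen:
  assumes "is_subring S" "W \<subseteq> ideal_gen S Z"
  shows "ideal_gen S W \<subseteq> ideal_gen S Z"
  by (rule ideal_gen_subsetI)
    (use assms in \<open>auto intro: zero_in_ideal_gen ideal_gen_add[OF assms(1)] ideal_gen_mult[OF assms(1)]\<close>)

lemma ideal_gen_eqI:
  assumes "is_subring S" "Z \<subseteq> W" "W \<subseteq> ideal_gen S Z"
  shows "ideal_gen S W = ideal_gen S Z"
  using ideal_gen_subset_ideal_gen[OF assms(1,3)] ideal_gen_mono[OF assms(2), of S S] by auto

lemma ideal_gen_subset_ring: "is_subring S \<Longrightarrow> Y \<subseteq> S \<Longrightarrow> ideal_gen S Y \<subseteq> S"
  by (rule ideal_gen_subsetI) (auto simp: is_subringD(1,3,5))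

lemma ideal_gen_zero: "Y \<subseteq> {0} \<Longrightarrow> ideal_gen S Y = {0}"
  using ideal_gen_subsetI[of "{0}" S Y] zero_in_ideal_gen[of S Y] by auto

lemma ideal_gen_extend:
  assumes "is_subring R" "is_subring T" "R \<subseteq> T"
  shows "ideal_gen T (ideal_gen R Z) = ideal_gen T Z"
proof (rule ideal_gen_eqI[OF assms(2)])
  show "Z \<subseteq> ideal_gen R Z" by (rule subset_ideal_gen[OF assms(1)])
  show "ideal_gen R Z \<subseteq> ideal_gen T Z" by (rule ideal_gen_mono) (use assms(3) in auto)
qed

lemma nz_submodule_ideal_gen:
  assumes "is_subring S" "x \<in> ideal_gen S Y" "x \<noteq> 0"
  shows "nz_submodule S (ideal_gen S Y)"
proof -
  have "ideal_gen S Y \<noteq> {0}" using assms(2,3) by blast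
  thus ?thesis unfolding nz_submodule_def
    using zero_in_ideal_gen ideal_gen_add[OF assms(1)] ideal_gen_mult[OF assms(1)] by simp
qed

lemma nz_submodule_ring: "is_subring S \<Longrightarrow> nz_submodule S S"
  unfolding nz_submodule_def using is_subringD by (metis singletonD zero_neq_one)

lemma semistar_mono:
  "semistar S st \<Longrightarrow> nz_submodule S E \<Longrightarrow> nz_submodule S F \<Longrightarrow> E \<subseteq> F \<Longrightarrow> st E \<subseteq> st F"
  unfolding semistar_def by blast

definition coeff_components :: "('g \<Rightarrow> 'k::field set) \<Rightarrow> 'k poly \<Rightarrow> 'k set" where
  "coeff_components B p = (\<Union>i. range (comp B (coeff p i)))"

lemma Af_eq_ideal_gen_coeff_components:
  assumes "is_subring S"
  shows "Af S B p = ideal_gen S (coeff_components B p)"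
  unfolding Af_def Cont_def coeff_components_def
proof (rule ideal_gen_eqI[OF assms])
  show "(\<Union>i. range (comp B (coeff p i))) \<subseteq> (\<Union>i. ideal_gen S (range (comp B (coeff p i))))"
    using subset_ideal_gen[OF assms] by (rule UN_mono[OF subset_refl])
  show "(\<Union>i. ideal_gen S (range (comp B (coeff p i)))) \<subseteq> ideal_gen S (\<Union>i. range (comp B (coeff p i)))"
    by (rule UN_least, rule ideal_gen_mono) auto
qed

text \<open>Covers both R with its grading and a homogeneous overring T graded by
  T_alpha = T \<inter> (R_H)_alpha.\<close>

locale graded_ring =
  fixes S :: "'k::field set" and B :: "'g::ab_group_add \<Rightarrow> 'k set"
  assumes subring: "is_subring S"
    and zero_in_grade: "0 \<in> B \<alpha>"
    and diff_in_grade: "x \<in> B \<alpha> \<Longrightarrow> y \<in> B \<alpha> \<Longrightarrow> x - y \<in> B \<alpha>"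
    and mult_in_grade: "x \<in> B \<alpha> \<Longrightarrow> y \<in> B \<beta> \<Longrightarrow> x * y \<in> B (\<alpha> + \<beta>)"
    and grade_subset: "B \<alpha> \<subseteq> S"
    and decomp_exists: "a \<in> S \<Longrightarrow> \<exists>f. is_decomp B a f"
    and grades_independent:
      "finite D \<Longrightarrow> (\<And>\<alpha>. \<alpha> \<in> D \<Longrightarrow> h \<alpha> \<in> B \<alpha>) \<Longrightarrow> sum h D = 0 \<Longrightarrow> \<alpha> \<in> D \<Longrightarrow> h \<alpha> = 0"
begin

lemma add_in_grade: "x \<in> B \<alpha> \<Longrightarrow> y \<in> B \<alpha> \<Longrightarrow> x + y \<in> B \<alpha>"
  using diff_in_grade[of 0 \<alpha> y] diff_in_grade[of x \<alpha> "0 - y"] zero_in_grade[of \<alpha>] by simp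

lemma decomp_unique:
  assumes "is_decomp B a f" "is_decomp B a g"
  shows "f = g"
proof
  fix \<alpha>
  define D where "D = {\<alpha>. f \<alpha> \<noteq> 0} \<union> {\<alpha>. g \<alpha> \<noteq> 0}"
  have fD: "finite D"
    unfolding D_def using is_decomp_finite[OF assms(1)] is_decomp_finite[OF assms(2)] by simp
  have "a = sum f D" by (rule is_decomp_sum[OF assms(1) fD]) (auto simp: D_def)
  moreover have "a = sum g D" by (rule is_decomp_sum[OF assms(2) fD]) (auto simp: D_def)
  ultimately have "sum (\<lambda>\<alpha>. f \<alpha> - g \<alpha>) D = 0" by (simp add: sum_subtractf)
  moreover have "f \<alpha> - g \<alpha> \<in> B \<alpha>" for \<alpha>
    using diff_in_grade[OF is_decomp_in[OF assms(1)] is_decomp_in[OF assms(2)]] .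
  ultimately have "f \<alpha> - g \<alpha> = 0" if "\<alpha> \<in> D"
    using grades_independent[OF fD, of "\<lambda>\<alpha>. f \<alpha> - g \<alpha>"] that by blast
  thus "f \<alpha> = g \<alpha>" by (cases "\<alpha> \<in> D") (auto simp: D_def)
qed

lemma comp_eqI: "is_decomp B a f \<Longrightarrow> comp B a = f"
  unfolding comp_def using decomp_unique by blast

lemma is_decomp_comp: "a \<in> S \<Longrightarrow> is_decomp B a (comp B a)"
  using decomp_exists comp_eqI by metis

lemma comp_in_grade: "a \<in> S \<Longrightarrow> comp B a \<alpha> \<in> B \<alpha>"
  by (rule is_decomp_in[OF is_decomp_comp])

lemma finite_comp_support: "a \<in> S \<Longrightarrow> finite {\<alpha>. comp B a \<alpha> \<noteq> 0}"
  by (rule is_decomp_finite[OF is_decomp_comp])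

lemma comp_homogeneous: "x \<in> B \<beta> \<Longrightarrow> comp B x = (\<lambda>\<alpha>. if \<alpha> = \<beta> then x else 0)"
  by (rule comp_eqI, rule is_decompI[where D="{\<beta>}"]) (simp_all add: zero_in_grade)

lemma comp_zero: "comp B 0 = (\<lambda>_. 0)"
  using comp_homogeneous[OF zero_in_grade] by simp

lemma range_comp_homogeneous: "x \<in> B \<beta> \<Longrightarrow> range (comp B x) \<subseteq> {x, 0}"
  by (auto simp: comp_homogeneous)

lemma mem_range_comp_homogeneous: "x \<in> B \<beta> \<Longrightarrow> x \<in> range (comp B x)"
  using rangeI[of "comp B x" \<beta>] by (simp add: comp_homogeneous)

lemma comp_add:
  assumes "a \<in> S" "b \<in> S"
  shows "comp B (a + b) = (\<lambda>\<alpha>. comp B a \<alpha> + comp B b \<alpha>)"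
proof (rule comp_eqI)
  define D where "D = {\<alpha>. comp B a \<alpha> \<noteq> 0} \<union> {\<alpha>. comp B b \<alpha> \<noteq> 0}"
  have fD: "finite D" unfolding D_def using finite_comp_support assms by auto
  have "a = sum (comp B a) D" by (rule is_decomp_sum[OF is_decomp_comp[OF assms(1)] fD]) (auto simp: D_def)
  moreover have "b = sum (comp B b) D" by (rule is_decomp_sum[OF is_decomp_comp[OF assms(2)] fD]) (auto simp: D_def)
  ultimately have "a + b = sum (\<lambda>\<alpha>. comp B a \<alpha> + comp B b \<alpha>) D" by (simp add: sum.distrib)
  thus "is_decomp B (a + b) (\<lambda>\<alpha>. comp B a \<alpha> + comp B b \<alpha>)"
    by (intro is_decompI[OF fD]) (auto simp: D_def assms comp_in_grade add_in_grade)
qed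

lemma comp_mult_homogeneous:
  assumes "s \<in> S" "y \<in> B \<beta>"
  shows "comp B (s * y) = (\<lambda>\<alpha>. comp B s (\<alpha> - \<beta>) * y)"
proof (rule comp_eqI)
  define Ds where "Ds = {\<alpha>. comp B s \<alpha> \<noteq> 0}"
  have fDs: "finite Ds" unfolding Ds_def using finite_comp_support[OF assms(1)] .
  define D where "D = (\<lambda>\<gamma>. \<gamma> + \<beta>) ` Ds"
  have fD: "finite D" unfolding D_def using fDs by auto
  have "sum (\<lambda>\<alpha>. comp B s (\<alpha> - \<beta>) * y) D = sum (comp B s) Ds * y"
    unfolding D_def by (subst sum.reindex) (auto simp: inj_on_def sum_distrib_right)
  also have "sum (comp B s) Ds = s"
    by (rule is_decomp_sum[OF is_decomp_comp[OF assms(1)] fDs, symmetric]) (auto simp: Ds_def)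
  finally have "s * y = sum (\<lambda>\<alpha>. comp B s (\<alpha> - \<beta>) * y) D" by simp
  moreover have "comp B s (\<alpha> - \<beta>) * y = 0" if "\<alpha> \<notin> D" for \<alpha>
  proof -
    have "\<alpha> = (\<alpha> - \<beta>) + \<beta>" by simp
    hence "\<alpha> - \<beta> \<notin> Ds" using that unfolding D_def by (metis image_eqI)
    thus ?thesis by (simp add: Ds_def)
  qed
  moreover have "comp B s (\<alpha> - \<beta>) * y \<in> B \<alpha>" for \<alpha>
    using mult_in_grade[OF comp_in_grade[OF assms(1)] assms(2), of "\<alpha> - \<beta>"] by simp
  ultimately show "is_decomp B (s * y) (\<lambda>\<alpha>. comp B s (\<alpha> - \<beta>) * y)"
    by (intro is_decompI[OF fD]) auto
qed

lemma exists_nonzero_comp: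
  assumes "a \<in> S" "a \<noteq> 0"
  obtains \<alpha> where "comp B a \<alpha> \<noteq> 0"
proof -
  have "a \<noteq> sum (comp B a) {}" using assms(2) by simp
  hence "\<not> {\<alpha>. comp B a \<alpha> \<noteq> 0} \<subseteq> {}"
    using is_decomp_sum[OF is_decomp_comp[OF assms(1)]] by blast
  thus ?thesis using that by blast
qed

lemma one_in_grade_zero: "1 \<in> B 0"
proof -
  have one: "1 \<in> S" by (rule is_subringD(2)[OF subring])
  then obtain \<gamma> where "comp B 1 \<gamma> \<noteq> 0" by (rule exists_nonzero_comp) simp
  moreover have "comp B (1 * comp B 1 \<gamma>) \<gamma> = comp B 1 \<gamma>"
    using comp_homogeneous[OF comp_in_grade[OF one]] by simp
  ultimately have "comp B 1 0 = 1"
    using comp_mult_homogeneous[OF one comp_in_grade[OF one], of \<gamma>] by simp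
  thus ?thesis using comp_in_grade[OF one, of 0] by simp
qed

lemma finite_range_comp: "a \<in> S \<Longrightarrow> finite (range (comp B a))"
proof -
  assume "a \<in> S"
  have "range (comp B a) \<subseteq> insert 0 (comp B a ` {\<alpha>. comp B a \<alpha> \<noteq> 0})" by auto
  thus ?thesis using finite_comp_support[OF \<open>a \<in> S\<close>] finite_subset by blast
qed

lemma mem_ideal_gen_range_comp:
  assumes "a \<in> S"
  shows "a \<in> ideal_gen S (range (comp B a))"
proof -
  have "a = sum (comp B a) {\<alpha>. comp B a \<alpha> \<noteq> 0}"
    by (rule is_decomp_sum[OF is_decomp_comp[OF assms] finite_comp_support[OF assms]]) simp
  also have "\<dots> \<in> ideal_gen S (range (comp B a))"
    using finite_comp_support[OF assms]
    by (intro ideal_gen_sum[OF subring] ballI generator_in_ideal_gen[OF subring]) auto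
  finally show ?thesis .
qed

lemma grades_independent_shift:
  assumes "finite D" "\<And>\<alpha>. \<alpha> \<in> D \<Longrightarrow> h \<alpha> \<in> B (\<alpha> + G)" "sum h D = 0" "\<alpha> \<in> D"
  shows "h \<alpha> = 0"
proof -
  define h' where "h' \<delta> = h (\<delta> - G)" for \<delta>
  have inj: "inj_on (\<lambda>\<alpha>. \<alpha> + G) D" by (auto simp: inj_on_def)
  have "sum h' ((\<lambda>\<alpha>. \<alpha> + G) ` D) = sum h D" by (simp add: sum.reindex[OF inj] h'_def)
  hence "h' (\<alpha> + G) = 0"
    using assms by (intro grades_independent[of "(\<lambda>\<alpha>. \<alpha> + G) ` D" h']) (auto simp: h'_def)
  thus ?thesis by (simp add: h'_def)
qed

lemma ideal_gen_homogeneous_comp: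
  assumes Y: "Y \<subseteq> \<Union>(range B)" and a: "a \<in> ideal_gen S Y"
  shows "comp B a \<alpha> \<in> ideal_gen S Y"
proof -
  let ?J = "ideal_gen S Y"
  have "ideal_gen S Y \<subseteq> {a \<in> S. \<forall>\<alpha>. comp B a \<alpha> \<in> ?J}"
  proof (rule ideal_gen_subsetI)
    show "0 \<in> {a \<in> S. \<forall>\<alpha>. comp B a \<alpha> \<in> ?J}"
      using is_subringD(1)[OF subring] by (simp add: comp_zero zero_in_ideal_gen)
    show "x + y \<in> {a \<in> S. \<forall>\<alpha>. comp B a \<alpha> \<in> ?J}" if "x \<in> {a \<in> S. \<forall>\<alpha>. comp B a \<alpha> \<in> ?J}"
      and "y \<in> {a \<in> S. \<forall>\<alpha>. comp B a \<alpha> \<in> ?J}" for x y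
      using that by (simp add: comp_add is_subringD(3)[OF subring] ideal_gen_add[OF subring])
    show "s * y \<in> {a \<in> S. \<forall>\<alpha>. comp B a \<alpha> \<in> ?J}" if "s \<in> S" "y \<in> Y" for s y
    proof -
      obtain \<beta> where y: "y \<in> B \<beta>" using Y \<open>y \<in> Y\<close> by blast
      have "comp B s (\<alpha> - \<beta>) * y \<in> ?J" for \<alpha>
        using grade_subset comp_in_grade[OF \<open>s \<in> S\<close>] \<open>y \<in> Y\<close>
        by (intro ideal_gen_mult[OF subring] generator_in_ideal_gen[OF subring]) auto
      moreover have "s * y \<in> S" using \<open>s \<in> S\<close> y grade_subset is_subringD(5)[OF subring] by blast
      ultimately show ?thesis using comp_mult_homogeneous[OF \<open>s \<in> S\<close> y] by simp
    qed
  qed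
  thus ?thesis using a by blast
qed

lemma coeff_components_homogeneous: "p \<in> polys S \<Longrightarrow> coeff_components B p \<subseteq> \<Union>(range B)"
  unfolding coeff_components_def polys_def using comp_in_grade by blast

lemma finite_coeff_components:
  assumes "p \<in> polys S"
  shows "finite (coeff_components B p)"
proof -
  have "range (comp B (coeff p i)) \<subseteq> insert 0 (\<Union>j\<le>degree p. range (comp B (coeff p j)))" for i
    by (cases "i \<le> degree p") (auto simp: coeff_eq_0 comp_zero)
  hence "coeff_components B p \<subseteq> insert 0 (\<Union>j\<le>degree p. range (comp B (coeff p j)))"
    unfolding coeff_components_def by blast
  moreover have "finite (range (comp B (coeff p i)))" for i
    using assms unfolding polys_def by (simp add: finite_range_comp)
  ultimately show ?thesis by (auto intro: finite_subset)
qed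

lemma Af_subset: "p \<in> polys S \<Longrightarrow> Af S B p \<subseteq> S"
  unfolding Af_eq_ideal_gen_coeff_components[OF subring]
  using coeff_components_homogeneous grade_subset by (intro ideal_gen_subset_ring[OF subring]) blast

lemma comp_in_Af: "p \<in> polys S \<Longrightarrow> a \<in> Af S B p \<Longrightarrow> comp B a \<alpha> \<in> Af S B p"
  unfolding Af_eq_ideal_gen_coeff_components[OF subring]
  by (rule ideal_gen_homogeneous_comp[OF coeff_components_homogeneous])

lemma coeff_in_Af:
  assumes "p \<in> polys S"
  shows "coeff p i \<in> Af S B p"
proof -
  have "coeff p i \<in> ideal_gen S (range (comp B (coeff p i)))"
    using assms unfolding polys_def by (simp add: mem_ideal_gen_range_comp)
  also have "\<dots> \<subseteq> Af S B p"
    unfolding Af_eq_ideal_gen_coeff_components[OF subring] coeff_components_def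
    by (rule ideal_gen_mono) auto
  finally show ?thesis .
qed

lemma Af_mult_subset:
  assumes g: "g \<in> polys S" and f: "f \<in> polys S"
  shows "Af S B (g * f) \<subseteq> Af S B f"
proof -
  have "coeff (g * f) k \<in> Af S B f" for k
  proof -
    have "coeff g i * coeff f (k - i) \<in> Af S B f" for i
      using g coeff_in_Af[OF f] unfolding polys_def Af_def by (simp add: ideal_gen_mult[OF subring])
    thus ?thesis unfolding coeff_mult Af_def by (simp add: ideal_gen_sum[OF subring])
  qed
  hence "coeff_components B (g * f) \<subseteq> Af S B f"
    unfolding coeff_components_def using comp_in_Af[OF f] by blast
  thus ?thesis
    unfolding Af_eq_ideal_gen_coeff_components[OF subring, of _ "g * f"]
    unfolding Af_eq_ideal_gen_coeff_components[OF subring, of _ f]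
    by (rule ideal_gen_subset_ideal_gen[OF subring])
qed

lemma nz_submodule_Af:
  assumes "p \<in> polys S" "p \<noteq> 0"
  shows "nz_submodule S (Af S B p)"
proof -
  obtain i where "coeff p i \<noteq> 0" using assms(2) by (metis leading_coeff_0_iff)
  moreover have "coeff p i \<in> Af S B p" by (rule coeff_in_Af[OF assms(1)])
  ultimately show ?thesis
    unfolding Af_def by (intro nz_submodule_ideal_gen[OF subring]) (simp_all add: Af_def)
qed

lemma Af_Poly_homogeneous:
  assumes "set xs \<subseteq> \<Union>(range B)"
  shows "Af S B (Poly xs) = ideal_gen S (set xs)"
  unfolding Af_eq_ideal_gen_coeff_components[OF subring]
proof (rule ideal_gen_eqI[OF subring])
  show "set xs \<subseteq> coeff_components B (Poly xs)"
  proof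
    fix x assume x: "x \<in> set xs"
    then obtain i where "i < length xs" "xs ! i = x" by (auto simp: in_set_conv_nth)
    hence "coeff (Poly xs) i = x" by (simp add: nth_default_nth)
    moreover obtain \<beta> where "x \<in> B \<beta>" using x assms by blast
    ultimately have "x \<in> range (comp B (coeff (Poly xs) i))"
      using mem_range_comp_homogeneous by simp
    thus "x \<in> coeff_components B (Poly xs)" unfolding coeff_components_def by blast
  qed
  have range_comp: "range (comp B c) \<subseteq> insert 0 (set xs)" if c: "c \<in> insert 0 (set xs)" for c
  proof (cases "c = 0")
    case False
    then obtain \<beta> where "c \<in> B \<beta>" using c assms by blast
    hence "range (comp B c) \<subseteq> {c, 0}" by (rule range_comp_homogeneous)
    thus ?thesis using c by auto
  qed (simp add: comp_zero)
  have "coeff (Poly xs) i \<in> insert 0 (set xs)" for i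
    by (auto simp: nth_default_def)
  hence "coeff_components B (Poly xs) \<subseteq> insert 0 (set xs)"
    unfolding coeff_components_def by (intro UN_least range_comp)
  thus "coeff_components B (Poly xs) \<subseteq> ideal_gen S (set xs)"
    using subset_ideal_gen[OF subring] zero_in_ideal_gen by blast
qed

lemma Nset_multD:
  assumes st: "semistar S st" and g: "g \<in> polys S" and f: "f \<in> polys S"
    and gf: "g * f \<in> Nset S B st"
  shows "f \<in> Nset S B st"
proof -
  have gf': "g * f \<in> polys S" "g * f \<noteq> 0" "st (Af S B (g * f)) = st S"
    using gf unfolding Nset_def by auto
  hence "f \<noteq> 0" by auto
  have "st S = st (Af S B (g * f))" using gf'(3) by simp
  also have "\<dots> \<subseteq> st (Af S B f)"
    by (rule semistar_mono[OF st nz_submodule_Af[OF gf'(1,2)] nz_submodule_Af[OF f \<open>f \<noteq> 0\<close>]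
          Af_mult_subset[OF g f]])
  also have "\<dots> \<subseteq> st S"
    by (rule semistar_mono[OF st nz_submodule_Af[OF f \<open>f \<noteq> 0\<close>] nz_submodule_ring[OF subring]
          Af_subset[OF f]])
  finally show ?thesis unfolding Nset_def using f \<open>f \<noteq> 0\<close> by blast
qed

lemma NA_subset_iff_Nset_subset:
  assumes R: "is_subring R" and RS: "R \<subseteq> S" and st: "semistar S st"
  shows "NA R A st\<^sub>R \<subseteq> NA S B st \<longleftrightarrow> Nset R A st\<^sub>R \<subseteq> Nset S B st"
proof -
  have polys: "polys R \<subseteq> polys S" using RS unfolding polys_def by blast
  show ?thesis
  proof
    assume sub: "NA R A st\<^sub>R \<subseteq> NA S B st"
    show "Nset R A st\<^sub>R \<subseteq> Nset S B st"
    proof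
      fix f assume f: "f \<in> Nset R A st\<^sub>R"
      have "1 \<in> polys R" using is_subringD(1,2)[OF R] unfolding polys_def by (simp add: coeff_1)
      hence "Fract 1 f \<in> NA S B st" using sub f unfolding NA_def by blast
      then obtain g h where gh: "Fract 1 f = Fract g h" "g \<in> polys S" "h \<in> Nset S B st"
        unfolding NA_def by blast
      have "f \<noteq> 0" "f \<in> polys S" using f polys unfolding Nset_def by auto
      moreover have "h \<noteq> 0" using gh(3) unfolding Nset_def by simp
      ultimately have "h = g * f" using gh(1) by (simp add: eq_fract)
      thus "f \<in> Nset S B st" using Nset_multD[OF st gh(2) \<open>f \<in> polys S\<close>] gh(3) by simp
    qed
  next
    assume "Nset R A st\<^sub>R \<subseteq> Nset S B st"
    thus "NA R A st\<^sub>R \<subseteq> NA S B st" using polys unfolding NA_def by blast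
  qed
qed

lemma homog_fg_ideal_Af:
  assumes "p \<in> polys S" "p \<noteq> 0"
  shows "homog_fg_ideal S B (Af S B p)"
  unfolding homog_fg_ideal_def
proof (intro conjI ballI allI exI)
  show "Af S B p \<noteq> {0}" using nz_submodule_Af[OF assms] unfolding nz_submodule_def by blast
  show "finite (coeff_components B p)" by (rule finite_coeff_components[OF assms(1)])
  show "coeff_components B p \<subseteq> S" using coeff_components_homogeneous[OF assms(1)] grade_subset by blast
  show "Af S B p = ideal_gen S (coeff_components B p)" by (rule Af_eq_ideal_gen_coeff_components[OF subring])
  show "comp B a \<alpha> \<in> Af S B p" if "a \<in> Af S B p" for a \<alpha> by (rule comp_in_Af[OF assms(1) that])
qed

lemma homog_fg_ideal_obtain_Af:
  assumes "homog_fg_ideal S B F"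
  obtains p where "p \<in> polys S" "p \<noteq> 0" "Af S B p = F"
proof -
  obtain X where X: "finite X" "X \<subseteq> S" "F = ideal_gen S X"
    using assms unfolding homog_fg_ideal_def by blast
  have F_comp: "comp B a \<alpha> \<in> F" if "a \<in> F" for a \<alpha>
    using assms that unfolding homog_fg_ideal_def by blast
  define X' where "X' = (\<Union>x\<in>X. range (comp B x))"
  have X'_homog: "X' \<subseteq> \<Union>(range B)" unfolding X'_def using X(2) comp_in_grade by blast
  have "X' \<subseteq> F"
  proof
    fix y assume "y \<in> X'"
    then obtain x \<alpha> where "x \<in> X" "y = comp B x \<alpha>" unfolding X'_def by blast
    moreover have "x \<in> F" using \<open>x \<in> X\<close> X(3) generator_in_ideal_gen[OF subring] by simp
    ultimately show "y \<in> F" using F_comp by simp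
  qed
  moreover have "X \<subseteq> ideal_gen S X'"
  proof
    fix x assume "x \<in> X"
    have "x \<in> ideal_gen S (range (comp B x))" using \<open>x \<in> X\<close> X(2) by (simp add: mem_ideal_gen_range_comp subset_iff)
    also have "\<dots> \<subseteq> ideal_gen S X'" unfolding X'_def using \<open>x \<in> X\<close> by (intro ideal_gen_mono) auto
    finally show "x \<in> ideal_gen S X'" .
  qed
  ultimately have F: "F = ideal_gen S X'"
    unfolding X(3) by (intro equalityI ideal_gen_subset_ideal_gen[OF subring])
  have "finite X'" unfolding X'_def using X(1,2) finite_range_comp by auto
  then obtain xs where xs: "set xs = X'" using finite_list by blast
  have Af: "Af S B (Poly xs) = F" using Af_Poly_homogeneous X'_homog F xs by simp
  have "set xs \<subseteq> S" using X'_homog grade_subset xs by blast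
  hence "Poly xs \<in> polys S"
    using is_subringD(1)[OF subring] unfolding polys_def by (auto simp: nth_default_def)
  moreover have "Poly xs \<noteq> 0"
  proof
    assume "Poly xs = 0"
    hence "set xs \<subseteq> {0}" by (auto simp: Poly_eq_0)
    hence "F = {0}" using F xs ideal_gen_zero by simp
    thus False using assms unfolding homog_fg_ideal_def by simp
  qed
  ultimately show ?thesis using that Af by blast
qed

lemma homogeneous_in_RH_comp: "x \<in> B \<alpha> \<Longrightarrow> x \<in> RH_comp B \<alpha>"
  unfolding RH_comp_def using one_in_grade_zero by force

lemma zero_in_RH_comp: "0 \<in> RH_comp B \<alpha>"
  by (rule homogeneous_in_RH_comp[OF zero_in_grade])

lemma diff_in_RH_comp:
  assumes "x \<in> RH_comp B \<alpha>" "y \<in> RH_comp B \<alpha>"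
  shows "x - y \<in> RH_comp B \<alpha>"
proof -
  obtain a b \<beta>1 \<gamma>1 where 1: "x = a / b" "a \<in> B \<beta>1" "b \<in> B \<gamma>1" "b \<noteq> 0" "\<alpha> = \<beta>1 - \<gamma>1"
    using assms(1) unfolding RH_comp_def by blast
  obtain c d \<beta>2 \<gamma>2 where 2: "y = c / d" "c \<in> B \<beta>2" "d \<in> B \<gamma>2" "d \<noteq> 0" "\<alpha> = \<beta>2 - \<gamma>2"
    using assms(2) unfolding RH_comp_def by blast
  have "\<beta>2 + \<gamma>1 = \<beta>1 + \<gamma>2" using 1(5) 2(5) by (metis add.commute diff_add_eq diff_eq_eq)
  hence "a * d - c * b \<in> B (\<beta>1 + \<gamma>2)"
    using mult_in_grade[OF 1(2) 2(3)] mult_in_grade[OF 2(2) 1(3)] by (simp add: diff_in_grade)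
  moreover have "b * d \<in> B (\<gamma>1 + \<gamma>2)" "b * d \<noteq> 0" using mult_in_grade[OF 1(3) 2(3)] 1(4) 2(4) by auto
  moreover have "x - y = (a * d - c * b) / (b * d)" using 1(1,4) 2(1,4) by (simp add: field_simps)
  moreover have "\<alpha> = (\<beta>1 + \<gamma>2) - (\<gamma>1 + \<gamma>2)" using 1(5) by simp
  ultimately show ?thesis unfolding RH_comp_def by blast
qed

lemma mult_in_RH_comp:
  assumes "x \<in> RH_comp B \<alpha>" "y \<in> RH_comp B \<alpha>'"
  shows "x * y \<in> RH_comp B (\<alpha> + \<alpha>')"
proof -
  obtain a b \<beta>1 \<gamma>1 where 1: "x = a / b" "a \<in> B \<beta>1" "b \<in> B \<gamma>1" "b \<noteq> 0" "\<alpha> = \<beta>1 - \<gamma>1"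
    using assms(1) unfolding RH_comp_def by blast
  obtain c d \<beta>2 \<gamma>2 where 2: "y = c / d" "c \<in> B \<beta>2" "d \<in> B \<gamma>2" "d \<noteq> 0" "\<alpha>' = \<beta>2 - \<gamma>2"
    using assms(2) unfolding RH_comp_def by blast
  have "a * c \<in> B (\<beta>1 + \<beta>2)" "b * d \<in> B (\<gamma>1 + \<gamma>2)" "b * d \<noteq> 0"
    using mult_in_grade[OF 1(2) 2(2)] mult_in_grade[OF 1(3) 2(3)] 1(4) 2(4) by auto
  moreover have "x * y = (a * c) / (b * d)" using 1(1) 2(1) by simp
  moreover have "\<alpha> + \<alpha>' = (\<beta>1 + \<beta>2) - (\<gamma>1 + \<gamma>2)" using 1(5) 2(5) by simp
  ultimately show ?thesis unfolding RH_comp_def by blast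
qed

lemma RH_comp_common_denominator:
  assumes "finite D" "\<And>\<alpha>. \<alpha> \<in> D \<Longrightarrow> h \<alpha> \<in> RH_comp B \<alpha>"
  obtains P G where "P \<in> B G" "P \<noteq> 0" "\<And>\<alpha>. \<alpha> \<in> D \<Longrightarrow> h \<alpha> * P \<in> B (\<alpha> + G)"
proof -
  have "\<exists>P G. P \<in> B G \<and> P \<noteq> 0 \<and> (\<forall>\<alpha>\<in>D. h \<alpha> * P \<in> B (\<alpha> + G))"
    using assms
  proof (induction D rule: finite_induct)
    case empty
    show ?case using one_in_grade_zero by auto
  next
    case (insert \<beta> D)
    then obtain P G where P: "P \<in> B G" "P \<noteq> 0" "\<forall>\<alpha>\<in>D. h \<alpha> * P \<in> B (\<alpha> + G)" by blast
    obtain a b \<beta>' \<gamma> where b: "h \<beta> = a / b" "a \<in> B \<beta>'" "b \<in> B \<gamma>" "b \<noteq> 0" "\<beta> = \<beta>' - \<gamma>"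
      using insert.prems[of \<beta>] unfolding RH_comp_def by blast
    have degree: "\<beta> + (G + \<gamma>) = \<beta>' + G" using b(5) by (simp add: algebra_simps)
    have numerator: "h \<beta> * (P * b) = a * P" using b(1,4) by simp
    have "h \<beta> * (P * b) \<in> B (\<beta> + (G + \<gamma>))"
      unfolding degree numerator by (rule mult_in_grade[OF b(2) P(1)])
    moreover have "h \<alpha> * (P * b) \<in> B (\<alpha> + (G + \<gamma>))" if "\<alpha> \<in> D" for \<alpha>
      using mult_in_grade[OF P(3)[rule_format, OF that] b(3)] by (simp add: algebra_simps)
    moreover have "P * b \<in> B (G + \<gamma>)" "P * b \<noteq> 0" using mult_in_grade[OF P(1) b(3)] P(2) b(4) by auto
    ultimately show ?case by blast
  qed
  thus ?thesis using that by blast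
qed

lemma RH_comp_independent:
  assumes "finite D" "\<And>\<alpha>. \<alpha> \<in> D \<Longrightarrow> h \<alpha> \<in> RH_comp B \<alpha>" "sum h D = 0" "\<alpha> \<in> D"
  shows "h \<alpha> = 0"
proof -
  obtain P G where P: "P \<in> B G" "P \<noteq> 0" "\<And>\<alpha>. \<alpha> \<in> D \<Longrightarrow> h \<alpha> * P \<in> B (\<alpha> + G)"
    using RH_comp_common_denominator[OF assms(1,2)] by blast
  have "(\<Sum>\<alpha>\<in>D. h \<alpha> * P) = 0" using assms(3) by (simp add: sum_distrib_right[symmetric])
  hence "h \<alpha> * P = 0" using grades_independent_shift[OF assms(1) P(3)] assms(4) by blast
  thus ?thesis using P(2) by simp
qed

lemma graded_ring_over_comp:
  assumes "homogeneous_overring S B T"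
  shows "graded_ring T (over_comp T B)"
proof -
  have T: "is_subring T" using assms unfolding homogeneous_overring_def by blast
  show ?thesis
  proof
    show "is_subring T" by (rule T)
    show "0 \<in> over_comp T B \<alpha>" for \<alpha>
      unfolding over_comp_def using is_subringD(1)[OF T] zero_in_RH_comp by simp
    show "x - y \<in> over_comp T B \<alpha>" if "x \<in> over_comp T B \<alpha>" "y \<in> over_comp T B \<alpha>" for x y \<alpha>
      using that unfolding over_comp_def by (simp add: is_subringD(4)[OF T] diff_in_RH_comp)
    show "x * y \<in> over_comp T B (\<alpha> + \<beta>)" if "x \<in> over_comp T B \<alpha>" "y \<in> over_comp T B \<beta>" for x y \<alpha> \<beta>
      using that unfolding over_comp_def by (simp add: is_subringD(5)[OF T] mult_in_RH_comp)
    show "over_comp T B \<alpha> \<subseteq> T" for \<alpha> unfolding over_comp_def by simp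
    show "\<exists>f. is_decomp (over_comp T B) a f" if "a \<in> T" for a
      using assms that unfolding homogeneous_overring_def by blast
    show "h \<alpha> = 0" if "finite D" "\<And>\<alpha>. \<alpha> \<in> D \<Longrightarrow> h \<alpha> \<in> over_comp T B \<alpha>" "sum h D = 0" "\<alpha> \<in> D"
      for D h \<alpha>
      using that RH_comp_independent[of D h \<alpha>] unfolding over_comp_def by blast
  qed
qed

lemma Af_over_comp:
  assumes ho: "homogeneous_overring S B T" and p: "p \<in> polys S"
  shows "Af T (over_comp T B) p = ideal_gen T (Af S B p)"
proof -
  interpret T: graded_ring T "over_comp T B" by (rule graded_ring_over_comp[OF ho])
  have ST: "S \<subseteq> T" using ho unfolding homogeneous_overring_def by blast
  have grade_over: "B \<alpha> \<subseteq> over_comp T B \<alpha>" for \<alpha>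
    unfolding over_comp_def using homogeneous_in_RH_comp grade_subset ST by blast
  have "comp (over_comp T B) c = comp B c" if "c \<in> S" for c
  proof (rule T.comp_eqI)
    have "is_decomp B c (comp B c)" by (rule is_decomp_comp[OF that])
    thus "is_decomp (over_comp T B) c (comp B c)" unfolding is_decomp_def using grade_over by blast
  qed
  hence "coeff_components (over_comp T B) p = coeff_components B p"
    using p unfolding coeff_components_def polys_def by simp
  thus ?thesis
    unfolding Af_eq_ideal_gen_coeff_components[OF T.subring] Af_eq_ideal_gen_coeff_components[OF subring]
    by (simp add: ideal_gen_extend[OF subring T.subring ST])
qed

lemma homog_linked_iff_Nset_subset:
  assumes ho: "homogeneous_overring S B T"
  shows "homog_linked S B st T st' \<longleftrightarrow> Nset S B st \<subseteq> Nset T (over_comp T B) st'"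
proof -
  have ST: "S \<subseteq> T" using ho unfolding homogeneous_overring_def by blast
  have Nset_iff: "f \<in> Nset T (over_comp T B) st' \<longleftrightarrow> st' (ideal_gen T (Af S B f)) = st' T"
    if "f \<in> polys S" "f \<noteq> 0" for f
    using that ST Af_over_comp[OF ho that(1)] unfolding Nset_def polys_def by auto
  show ?thesis
  proof
    assume linked: "homog_linked S B st T st'"
    show "Nset S B st \<subseteq> Nset T (over_comp T B) st'"
    proof
      fix f assume "f \<in> Nset S B st"
      hence f: "f \<in> polys S" "f \<noteq> 0" "st (Af S B f) = st S" unfolding Nset_def by auto
      thus "f \<in> Nset T (over_comp T B) st'"
        using linked homog_fg_ideal_Af[OF f(1,2)] Nset_iff[OF f(1,2)]
        unfolding homog_linked_def by blast
    qed
  next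
    assume sub: "Nset S B st \<subseteq> Nset T (over_comp T B) st'"
    show "homog_linked S B st T st'" unfolding homog_linked_def
    proof (intro allI impI, elim conjE)
      fix F assume F: "homog_fg_ideal S B F" "st F = st S"
      obtain f where f: "f \<in> polys S" "f \<noteq> 0" "Af S B f = F" using F(1) by (rule homog_fg_ideal_obtain_Af)
      hence "f \<in> Nset S B st" using \<open>st F = st S\<close> unfolding Nset_def by simp
      thus "st' (ideal_gen T F) = st' T" using sub Nset_iff[OF f(1,2)] f(3) by blast
    qed
  qed
qed

end

lemma graded_domain_graded_ring:
  assumes "graded_domain \<Gamma> R A"
  shows "graded_ring R A"
proof
  have R: "\<And>a. a \<in> R \<longleftrightarrow> (\<exists>f. is_decomp A a f)"
    and unique: "\<And>a f g. is_decomp A a f \<Longrightarrow> is_decomp A a g \<Longrightarrow> f = g"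
    and zero: "\<And>\<alpha>. 0 \<in> A \<alpha>"
    using assms unfolding graded_domain_def additive_subgroup_def by blast+
  show "is_subring R" "\<And>\<alpha>. 0 \<in> A \<alpha>"
    "\<And>x \<alpha> y. x \<in> A \<alpha> \<Longrightarrow> y \<in> A \<alpha> \<Longrightarrow> x - y \<in> A \<alpha>"
    "\<And>x \<alpha> y \<beta>. x \<in> A \<alpha> \<Longrightarrow> y \<in> A \<beta> \<Longrightarrow> x * y \<in> A (\<alpha> + \<beta>)"
    "\<And>a. a \<in> R \<Longrightarrow> \<exists>f. is_decomp A a f"
    using assms unfolding graded_domain_def additive_subgroup_def by blast+
  show "A \<alpha> \<subseteq> R" for \<alpha>
  proof
    fix x assume "x \<in> A \<alpha>"
    hence "is_decomp A x (\<lambda>\<beta>. if \<beta> = \<alpha> then x else 0)"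
      by (intro is_decompI[where D="{\<alpha>}"]) (simp_all add: zero)
    thus "x \<in> R" using R by blast
  qed
  show "h \<alpha> = 0" if D: "finite D" "\<And>\<alpha>. \<alpha> \<in> D \<Longrightarrow> h \<alpha> \<in> A \<alpha>" "sum h D = 0" "\<alpha> \<in> D" for D h \<alpha>
  proof -
    define f where "f \<beta> = (if \<beta> \<in> D then h \<beta> else 0)" for \<beta>
    have "is_decomp A 0 f" by (rule is_decompI[OF D(1)]) (simp_all add: f_def zero D(2,3))
    moreover have "is_decomp A 0 (\<lambda>_. 0)" by (rule is_decompI[where D="{}"]) (simp_all add: zero)
    ultimately have "f = (\<lambda>_. 0)" by (rule unique)
    thus ?thesis using D(4) unfolding f_def by (metis (mono_tags))
  qed
qed

theorem lemma2p8:
  fixes \<Gamma> :: "'g::ab_group_add set" and R T :: "'k::field set" and A :: "'g \<Rightarrow> 'k set"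
    and st st' :: "'k set \<Rightarrow> 'k set"
  assumes "graded_domain \<Gamma> R A"
    and "\<forall>x::'k. \<exists>a\<in>R. \<exists>b\<in>R. b \<noteq> 0 \<and> x = a / b"
    and "homogeneous_overring R A T"
    and "semistar R st"
    and "semistar T st'"
  shows "homog_linked R A st T st' \<longleftrightarrow> NA R A st \<subseteq> NA T (over_comp T A) st'"
proof -
  interpret R: graded_ring R A by (rule graded_domain_graded_ring[OF assms(1)])
  interpret T: graded_ring T "over_comp T A" by (rule R.graded_ring_over_comp[OF assms(3)])
  have "R \<subseteq> T" using assms(3) unfolding homogeneous_overring_def by blast
  have "homog_linked R A st T st' \<longleftrightarrow> Nset R A st \<subseteq> Nset T (over_comp T A) st'"
    by (rule R.homog_linked_iff_Nset_subset[OF assms(3)])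
  also have "\<dots> \<longleftrightarrow> NA R A st \<subseteq> NA T (over_comp T A) st'"
    by (rule T.NA_subset_iff_Nset_subset[OF R.subring \<open>R \<subseteq> T\<close> assms(5), symmetric])
  finally show ?thesis .
qed

end
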